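(* Let $0<b<1$ and let $(G,\lambda)$ be a soft-hardcore model on $G=(V,E)$ that is $b$-marginally bounded. For every $v\in V$, let $\deg^{\mathrm{free}}_v$ be the number of neighbors $u$ of $v$ with $\lambda_u>0$. Then for every $v\in V$, $\deg^{\mathrm{free}}_v\le\frac{\ln b}{\ln(1-b)}$.
   Context: Hardcore model $(G,\lambda)$: weight $\prod_{v:\sigma_v=+1}\lambda_v$ for $\sigma\in\{-1,+1\}^V$ with $\{v:\sigma_v=+1\}$ independent, else $0$; Gibbs distribution $\mu$ is the normalized weight. Soft: $\lambda_v>0$ for all $v$. $b$-marginally bounded: for every $\Lambda\subseteq V$, feasible $\sigma\in\{\pm1\}^\Lambda$, $v\in V$, $c\in\{\pm1\}$, $\mu^\sigma_v(c)>0$ implies $\mu^\sigma_v(c)\ge b$. *)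

theory Defs
  imports Complex_Main
begin

text \<open>Graph G = (V,E): finite vertex set V, edge relation E (symmetric, irreflexive, on V).
A full configuration in {-1,+1}^V is represented by the set S of vertices with spin +1.\<close>

definition independent :: "('a \<Rightarrow> 'a \<Rightarrow> bool) \<Rightarrow> 'a set \<Rightarrow> bool" where
  "independent E S \<longleftrightarrow> (\<forall>u\<in>S. \<forall>w\<in>S. \<not> E u w)"

definition hc_weight :: "('a \<Rightarrow> 'a \<Rightarrow> bool) \<Rightarrow> ('a \<Rightarrow> real) \<Rightarrow> 'a set \<Rightarrow> real" where
  "hc_weight E lam S = (if independent E S then (\<Prod>v\<in>S. lam v) else 0)"

definition agrees :: "'a set \<Rightarrow> ('a \<Rightarrow> int) \<Rightarrow> 'a set \<Rightarrow> bool" where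
  "agrees Lam sigma S \<longleftrightarrow> (\<forall>u\<in>Lam. (sigma u = 1 \<longleftrightarrow> u \<in> S))"

definition pin_mass :: "'a set \<Rightarrow> ('a \<Rightarrow> 'a \<Rightarrow> bool) \<Rightarrow> ('a \<Rightarrow> real) \<Rightarrow> 'a set \<Rightarrow> ('a \<Rightarrow> int) \<Rightarrow> real" where
  "pin_mass V E lam Lam sigma = (\<Sum>S\<in>{S. S \<subseteq> V \<and> agrees Lam sigma S}. hc_weight E lam S)"

definition feasible :: "'a set \<Rightarrow> ('a \<Rightarrow> 'a \<Rightarrow> bool) \<Rightarrow> ('a \<Rightarrow> real) \<Rightarrow> 'a set \<Rightarrow> ('a \<Rightarrow> int) \<Rightarrow> bool" where
  "feasible V E lam Lam sigma \<longleftrightarrow> (\<forall>u\<in>Lam. sigma u \<in> {-1, 1}) \<and> pin_mass V E lam Lam sigma > 0"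

definition cond_marginal :: "'a set \<Rightarrow> ('a \<Rightarrow> 'a \<Rightarrow> bool) \<Rightarrow> ('a \<Rightarrow> real) \<Rightarrow> 'a set \<Rightarrow> ('a \<Rightarrow> int) \<Rightarrow> 'a \<Rightarrow> int \<Rightarrow> real" where
  "cond_marginal V E lam Lam sigma v c =
     (\<Sum>S\<in>{S. S \<subseteq> V \<and> agrees Lam sigma S \<and> (v \<in> S \<longleftrightarrow> c = 1)}. hc_weight E lam S)
     / pin_mass V E lam Lam sigma"

definition marginally_bounded :: "'a set \<Rightarrow> ('a \<Rightarrow> 'a \<Rightarrow> bool) \<Rightarrow> ('a \<Rightarrow> real) \<Rightarrow> real \<Rightarrow> bool" where
  "marginally_bounded V E lam b \<longleftrightarrow>
     (\<forall>Lam sigma v c. Lam \<subseteq> V \<and> feasible V E lam Lam sigma \<and> v \<in> V \<and> c \<in> {-1, 1} \<and>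
        cond_marginal V E lam Lam sigma v c > 0 \<longrightarrow> cond_marginal V E lam Lam sigma v c \<ge> b)"

definition soft :: "'a set \<Rightarrow> ('a \<Rightarrow> real) \<Rightarrow> bool" where
  "soft V lam \<longleftrightarrow> (\<forall>v\<in>V. lam v > 0)"

definition free_degree :: "'a set \<Rightarrow> ('a \<Rightarrow> 'a \<Rightarrow> bool) \<Rightarrow> ('a \<Rightarrow> real) \<Rightarrow> 'a \<Rightarrow> nat" where
  "free_degree V E lam v = card {u \<in> V. E v u \<and> lam u > 0}"

end

theory Submission
  imports Defs
begin

text \<open>Pin a set T of vertices to -1. If u is a further vertex, then in the soft model the
configuration with u alone at +1 has positive weight, so the marginal of u at +1 is positive
and therefore at least b; pinning u to -1 as well thus shrinks the mass by a factor 1 - b.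
Pinning the free neighbours of v one by one, their joint probability of being -1 is at most
(1 - b)^deg. This event contains the event that v is +1, whose probability is at least b.
Hence b \<le> (1 - b)^deg; take logarithms.\<close>

lemma agrees_all_minus_iff: "agrees T (\<lambda>_. -1) S \<longleftrightarrow> T \<inter> S = {}"
  by (auto simp: agrees_def)

lemma card_le_ln_ratio_if_le_power:
  fixes b :: real
  assumes "0 < b" "b < 1" "b \<le> (1 - b) ^ n"
  shows "real n \<le> ln b / ln (1 - b)"
proof -
  have "ln b \<le> ln ((1 - b) ^ n)"
    using assms by simp
  also have "\<dots> = real n * ln (1 - b)"
    using assms(2) by (simp add: ln_realpow)
  finally show ?thesis
    using assms(1,2) by (simp add: le_divide_eq)
qed

locale soft_hardcore =
  fixes V :: "'a set" and E :: "'a \<Rightarrow> 'a \<Rightarrow> bool" and lam :: "'a \<Rightarrow> real"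
  assumes finite_V: "finite V"
    and soft: "soft V lam"
    and irrefl: "\<not> E u u"
begin

definition minus_mass :: "'a set \<Rightarrow> real" where
  "minus_mass T = (\<Sum>S\<in>{S. S \<subseteq> V \<and> T \<inter> S = {}}. hc_weight E lam S)"

definition minus_plus_mass :: "'a set \<Rightarrow> 'a \<Rightarrow> real" where
  "minus_plus_mass T u = (\<Sum>S\<in>{S. S \<subseteq> V \<and> T \<inter> S = {} \<and> u \<in> S}. hc_weight E lam S)"

lemma finite_subsets: "finite {S. S \<subseteq> V \<and> P S}"
  using finite_V by (rule finite_subset[rotated, OF finite_Collect_subsets]) auto

lemma hc_weight_nonneg: "S \<subseteq> V \<Longrightarrow> 0 \<le> hc_weight E lam S"
  using soft by (auto simp: hc_weight_def soft_def intro!: prod_nonneg less_imp_le prod_pos)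

lemma pin_mass_all_minus: "pin_mass V E lam T (\<lambda>_. -1) = minus_mass T"
  by (simp add: pin_mass_def minus_mass_def agrees_all_minus_iff)

lemma cond_marginal_all_minus_plus:
  "cond_marginal V E lam T (\<lambda>_. -1) u 1 = minus_plus_mass T u / minus_mass T"
  by (simp add: cond_marginal_def minus_plus_mass_def pin_mass_all_minus
      agrees_all_minus_iff)

lemma minus_mass_pos: "0 < minus_mass T"
proof -
  have "hc_weight E lam {} \<le> minus_mass T"
    unfolding minus_mass_def
    by (rule member_le_sum) (auto intro: hc_weight_nonneg finite_subsets)
  then show ?thesis
    by (simp add: hc_weight_def independent_def)
qed

lemma minus_plus_mass_pos:
  assumes "u \<in> V" "u \<notin> T"
  shows "0 < minus_plus_mass T u"
proof -
  have "hc_weight E lam {u} \<le> minus_plus_mass T u"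
    unfolding minus_plus_mass_def
    by (rule member_le_sum) (use assms in \<open>auto intro: hc_weight_nonneg finite_subsets\<close>)
  moreover have "hc_weight E lam {u} = lam u"
    using irrefl by (simp add: hc_weight_def independent_def)
  ultimately show ?thesis
    using soft assms(1) by (auto simp: soft_def)
qed

lemma minus_plus_mass_ge:
  assumes "marginally_bounded V E lam b" "T \<subseteq> V" "u \<in> V" "u \<notin> T"
  shows "b * minus_mass T \<le> minus_plus_mass T u"
proof -
  have "feasible V E lam T (\<lambda>_. -1)"
    by (simp add: feasible_def pin_mass_all_minus minus_mass_pos)
  moreover have "0 < cond_marginal V E lam T (\<lambda>_. -1) u 1"
    by (simp add: cond_marginal_all_minus_plus minus_plus_mass_pos minus_mass_pos assms(3,4))
  ultimately have "b \<le> cond_marginal V E lam T (\<lambda>_. -1) u 1"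
    using assms(1-3) unfolding marginally_bounded_def by blast
  then show ?thesis
    by (simp add: cond_marginal_all_minus_plus minus_mass_pos le_divide_eq)
qed

lemma minus_mass_split:
  assumes "u \<notin> T"
  shows "minus_mass T = minus_plus_mass T u + minus_mass (insert u T)"
proof -
  have "{S. S \<subseteq> V \<and> T \<inter> S = {}} =
      {S. S \<subseteq> V \<and> T \<inter> S = {} \<and> u \<in> S} \<union> {S. S \<subseteq> V \<and> insert u T \<inter> S = {}}"
    by auto
  then show ?thesis
    unfolding minus_mass_def minus_plus_mass_def
    by (simp only:) (rule sum.union_disjoint, auto intro: finite_subsets)
qed

lemma minus_mass_insert_le:
  assumes "marginally_bounded V E lam b" "T \<subseteq> V" "u \<in> V" "u \<notin> T"
  shows "minus_mass (insert u T) \<le> (1 - b) * minus_mass T"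
  using minus_mass_split[OF assms(4)] minus_plus_mass_ge[OF assms]
  by (simp add: algebra_simps)

lemma minus_mass_le_power:
  assumes "marginally_bounded V E lam b" "b < 1" "F \<subseteq> V"
  shows "minus_mass F \<le> (1 - b) ^ card F * minus_mass {}"
  using finite_subset[OF assms(3) finite_V] assms(3)
proof (induction F rule: finite_induct)
  case empty
  then show ?case by simp
next
  case (insert u F)
  have "minus_mass (insert u F) \<le> (1 - b) * minus_mass F"
    using insert by (intro minus_mass_insert_le[OF assms(1)]) auto
  also have "\<dots> \<le> (1 - b) * ((1 - b) ^ card F * minus_mass {})"
    using insert assms(2) by (intro mult_left_mono) auto
  finally show ?case
    using insert by simp
qed

lemma minus_plus_mass_le_neighbours:
  assumes "N \<subseteq> {w. E v w}"
  shows "minus_plus_mass {} v \<le> minus_mass N"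
proof -
  have "minus_plus_mass {} v =
      (\<Sum>S\<in>{S. S \<subseteq> V \<and> v \<in> S \<and> N \<inter> S = {}}. hc_weight E lam S)"
    unfolding minus_plus_mass_def
    by (rule sum.mono_neutral_right)
      (use assms in \<open>auto intro: finite_subsets simp: hc_weight_def independent_def\<close>)
  also have "\<dots> \<le> minus_mass N"
    unfolding minus_mass_def
    by (rule sum_mono2) (auto intro: finite_subsets hc_weight_nonneg)
  finally show ?thesis .
qed

end

theorem lemma6p5:
  fixes V :: "'a set" and E :: "'a \<Rightarrow> 'a \<Rightarrow> bool" and lam :: "'a \<Rightarrow> real" and b :: real
  assumes "finite V"
    and "\<And>u w. E u w \<Longrightarrow> u \<in> V \<and> w \<in> V"
    and "\<And>u w. E u w \<Longrightarrow> E w u"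
    and "\<And>u. \<not> E u u"
    and "0 < b" and "b < 1"
    and "soft V lam"
    and "marginally_bounded V E lam b"
  shows "\<forall>v\<in>V. real (free_degree V E lam v) \<le> ln b / ln (1 - b)"
proof
  interpret soft_hardcore V E lam
    using assms(1,4,7) by unfold_locales
  fix v assume "v \<in> V"
  define N where "N = {u \<in> V. E v u \<and> lam u > 0}"
  have "b * minus_mass {} \<le> minus_plus_mass {} v"
    using minus_plus_mass_ge[OF assms(8)] \<open>v \<in> V\<close> by simp
  also have "\<dots> \<le> minus_mass N"
    by (rule minus_plus_mass_le_neighbours) (auto simp: N_def)
  also have "\<dots> \<le> (1 - b) ^ card N * minus_mass {}"
    by (rule minus_mass_le_power[OF assms(8,6)]) (auto simp: N_def)
  finally have "b \<le> (1 - b) ^ card N"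
    using minus_mass_pos[of "{}"] by simp
  then show "real (free_degree V E lam v) \<le> ln b / ln (1 - b)"
    unfolding free_degree_def N_def[symmetric]
    using assms(5,6) by (rule card_le_ln_ratio_if_le_power[rotated 2])
qed

end
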